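(* Let $N=[1,n]=\{1,\dots,n\}$ ($n\ge0$). Then \[ |G_2(N)/{\sim}|=\sum_{[M]\in\mathcal{P}(N)/{\sim}}|\overline{L}_2(|M|)/\mathcal{S}_2| + \sum_{[M]\in\mathcal{P}(N)/{\sim},\ M\notin\mathrm{Sym}}\big(|\overline{t}^{\langle 1\rangle}_{|M|}|+|\overline{t}^{\langle c\rangle}_{|M|}|\big). \]
   Context: Binary CAs: for finite $M=\{j_1<\dots<j_m\}\subset\mathbb{Z}$ and $f:\{0,1\}^m\to\{0,1\}$, $\Phi^M_f(x)_i=f(x_{i+j_1}\dots x_{i+j_m})$ on $\{0,1\}^{\mathbb{Z}}$; $G_2(N)=\{\Phi^N_f\mid f:\{0,1\}^{|N|}\to\{0,1\}\}$. $\overline{L}_2(m)$ is the set of irreducible $f:\{0,1\}^m\to\{0,1\}$ (depending on every argument). On rules: $c$ swaps $0,1$ letterwise, $r$ reverses words, $\hat cf(w)=cf(cw)$, $\hat rf(w)=f(rw)$; $\mathcal{S}_2=\{1,r,c,rc\}$ acts on $\overline{L}_2(m)$, $\mathrm{stab}(f)=\{\alpha\mid\hat\alpha f=f\}$, $\overline{t}^U_m=\{[f]\in\overline{L}_2(m)/\mathcal{S}_2\mid\mathrm{stab}(f)=U\}$. On global maps: $\sigma\Phi=\sigma\circ\Phi$ with $(\sigma x)_i=x_{i+1}$, $\hat c\Phi(x)=c\Phi(cx)$, $\hat r\Phi(x)=r\Phi(rx)$ with $(rx)_i=x_{-i}$; $\Phi\cong\Psi$ iff $\Psi$ is obtained from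 $\Phi$ by an element of the group generated by $\sigma,\hat r,\hat c$. Scaling: for a positive rational $v$ and a global map $\Phi$ admitting a representation $\Phi=\Phi^M_f$ with $vM\subseteq\mathbb{Z}$ (where $vM=\{vi\mid i\in M\}$), $\hat s_v\Phi=\Phi^{vM}_f$ (independent of the representation). $\Phi\sim\Psi$ iff there are global maps $\Phi',\Psi'$ and a positive rational $v$ with $\Phi\cong\Phi'$, $\Psi\cong\Psi'$ and $\Psi'=\hat s_v\Phi'$; $G_2(N)/{\sim}$ is the set of classes of this equivalence relation restricted to $G_2(N)$. For sets of integers: $M\cong M'$ iff $M'=j+M$ or $M'=j-M$ for some $j\in\mathbb{Z}$; $M\sim M'$ iff there are $M'',M'''\subseteq\mathbb{Z}$ and a positive rational $v$ with $M\cong M''$, $M'\cong M'''$, $M'''=vM''$; $\mathcal{P}(N)/{\sim}$ is the set of classes of $\sim$ restricted to subsets of $N$. $\mathrm{Sym}$ is the set of $M$ with $M=j-M$ for some $j\in\mathbb{Z}$. *)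

theory Defs
  imports Main "HOL.Rat"
begin

type_synonym config = "int \<Rightarrow> bool"
type_synonym gmap = "config \<Rightarrow> config"

text \<open>Local rules of arity m: functions on binary words of length m,
  extended by False outside words of length m (so that each rule has a unique
  representative).\<close>
definition rules :: "nat \<Rightarrow> (bool list \<Rightarrow> bool) set" where
  "rules m = {f. \<forall>w. length w \<noteq> m \<longrightarrow> f w = False}"

definition Phi :: "int set \<Rightarrow> (bool list \<Rightarrow> bool) \<Rightarrow> gmap" where
  "Phi M f x i = f (map (\<lambda>j. x (i + j)) (sorted_list_of_set M))"

definition G2 :: "int set \<Rightarrow> gmap set" where
  "G2 N = {Phi N f | f. f \<in> rules (card N)}"

definition irreducible_rule :: "nat \<Rightarrow> (bool list \<Rightarrow> bool) \<Rightarrow> bool" where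
  "irreducible_rule m f \<longleftrightarrow>
     (\<forall>i<m. \<exists>w. length w = m \<and> f w \<noteq> f (w[i := \<not> w ! i]))"

definition Lbar :: "nat \<Rightarrow> (bool list \<Rightarrow> bool) set" where
  "Lbar m = {f \<in> rules m. irreducible_rule m f}"

datatype S2 = S1 | Sr | Sc | Src

definition hat_c_rule :: "nat \<Rightarrow> (bool list \<Rightarrow> bool) \<Rightarrow> (bool list \<Rightarrow> bool)" where
  "hat_c_rule m f w = (length w = m \<and> \<not> f (map Not w))"

definition hat_r_rule :: "nat \<Rightarrow> (bool list \<Rightarrow> bool) \<Rightarrow> (bool list \<Rightarrow> bool)" where
  "hat_r_rule m f w = (length w = m \<and> f (rev w))"

fun act :: "nat \<Rightarrow> S2 \<Rightarrow> (bool list \<Rightarrow> bool) \<Rightarrow> (bool list \<Rightarrow> bool)" where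
  "act m S1 f = f"
| "act m Sr f = hat_r_rule m f"
| "act m Sc f = hat_c_rule m f"
| "act m Src f = hat_r_rule m (hat_c_rule m f)"

definition stab :: "nat \<Rightarrow> (bool list \<Rightarrow> bool) \<Rightarrow> S2 set" where
  "stab m f = {\<alpha>. act m \<alpha> f = f}"

definition orbrel :: "nat \<Rightarrow> ((bool list \<Rightarrow> bool) \<times> (bool list \<Rightarrow> bool)) set" where
  "orbrel m = {(f, g). f \<in> Lbar m \<and> g \<in> Lbar m \<and> (\<exists>\<alpha>. g = act m \<alpha> f)}"

definition tbar :: "nat \<Rightarrow> S2 set \<Rightarrow> (bool list \<Rightarrow> bool) set set" where
  "tbar m U = {orbrel m `` {f} | f. f \<in> Lbar m \<and> stab m f = U}"

definition shift_cfg :: "config \<Rightarrow> config" where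
  "shift_cfg x i = x (i + 1)"

definition c_cfg :: "config \<Rightarrow> config" where
  "c_cfg x i = (\<not> x i)"

definition r_cfg :: "config \<Rightarrow> config" where
  "r_cfg x i = x (- i)"

definition sigma_g :: "gmap \<Rightarrow> gmap" where
  "sigma_g \<Phi> = shift_cfg \<circ> \<Phi>"

definition hat_c_g :: "gmap \<Rightarrow> gmap" where
  "hat_c_g \<Phi> x = c_cfg (\<Phi> (c_cfg x))"

definition hat_r_g :: "gmap \<Rightarrow> gmap" where
  "hat_r_g \<Phi> x = r_cfg (\<Phi> (r_cfg x))"

definition gen_step :: "(gmap \<times> gmap) set" where
  "gen_step = {(\<Phi>, sigma_g \<Phi>) | \<Phi>. True} \<union> {(\<Phi>, hat_r_g \<Phi>) | \<Phi>. True}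
              \<union> {(\<Phi>, hat_c_g \<Phi>) | \<Phi>. True}"

text \<open>Phi \<cong> Psi: Psi is obtained from Phi by an element of the group generated by
  sigma, hat r, hat c (all bijections on global maps), i.e. the equivalence
  closure of the generating steps.\<close>
definition gcong :: "gmap \<Rightarrow> gmap \<Rightarrow> bool" where
  "gcong \<Phi> \<Psi> \<longleftrightarrow> (\<Phi>, \<Psi>) \<in> (gen_step \<union> gen_step\<inverse>)\<^sup>*"

definition smul :: "rat \<Rightarrow> int set \<Rightarrow> int set" where
  "smul v M = {k. \<exists>i\<in>M. of_int k = v * of_int i}"

definition int_scalable :: "rat \<Rightarrow> int set \<Rightarrow> bool" where
  "int_scalable v M \<longleftrightarrow> (\<forall>i\<in>M. v * of_int i \<in> \<int>)"

definition scales :: "rat \<Rightarrow> gmap \<Rightarrow> gmap \<Rightarrow> bool" where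
  "scales v \<Phi> \<Psi> \<longleftrightarrow> (\<exists>M f. finite M \<and> f \<in> rules (card M) \<and> int_scalable v M \<and>
      \<Phi> = Phi M f \<and> \<Psi> = Phi (smul v M) f)"

definition gsim :: "gmap \<Rightarrow> gmap \<Rightarrow> bool" where
  "gsim \<Phi> \<Psi> \<longleftrightarrow> (\<exists>\<Phi>' \<Psi>' v. gcong \<Phi> \<Phi>' \<and> gcong \<Psi> \<Psi>' \<and> v > 0 \<and> scales v \<Phi>' \<Psi>')"

definition gsim_on :: "int set \<Rightarrow> (gmap \<times> gmap) set" where
  "gsim_on N = {(\<Phi>, \<Psi>). \<Phi> \<in> G2 N \<and> \<Psi> \<in> G2 N \<and> gsim \<Phi> \<Psi>}"

definition scong :: "int set \<Rightarrow> int set \<Rightarrow> bool" where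
  "scong M M' \<longleftrightarrow> (\<exists>j. M' = (\<lambda>i. j + i) ` M \<or> M' = (\<lambda>i. j - i) ` M)"

definition ssim :: "int set \<Rightarrow> int set \<Rightarrow> bool" where
  "ssim M M' \<longleftrightarrow> (\<exists>M'' M''' v. v > 0 \<and> scong M M'' \<and> scong M' M''' \<and>
      int_scalable v M'' \<and> M''' = smul v M'')"

definition ssim_on :: "int set \<Rightarrow> (int set \<times> int set) set" where
  "ssim_on N = {(M, M'). M \<subseteq> N \<and> M' \<subseteq> N \<and> ssim M M'}"

definition Sym :: "int set set" where
  "Sym = {M. \<exists>j. M = (\<lambda>i. j - i) ` M}"

definition rep :: "'a set \<Rightarrow> 'a" where
  "rep C = (SOME M. M \<in> C)"

end

theory Submission
  imports Defs
begin

(* Every map in G2 N is Phi M g for a unique M \<subseteq> N and an irreducible rule g: M is the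
   set of cells the map really depends on.  In these normal forms Phi \<sim> Psi says that the
   neighbourhoods correspond under a rational affine bijection j \<mapsto> s j + t and the rules
   under an element of S_2 that contains r exactly when s < 0.  So the classes of G2 N are
   grouped by the class [M] of their neighbourhood, and those over [M] are the orbits on
   Lbar |M| of all of S_2 if M is symmetric (a reflection maps M onto itself), and of the
   subgroup generated by c otherwise.  An S_2-orbit splits into two such c-orbits exactly
   when its stabiliser is <1> or <c>, which produces the second sum. *)

type_synonym rule = "bool list \<Rightarrow> bool"

section \<open>Counting equivalence classes\<close>

lemma card_quotient_sum_fibres:
  assumes A: "finite A" "equiv A r" and B: "finite B" "equiv B s"
    and into: "\<And>a. a \<in> A \<Longrightarrow> \<pi> a \<in> B" and resp: "\<And>a a'. (a, a') \<in> r \<Longrightarrow> (\<pi> a, \<pi> a') \<in> s"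
  shows "card (A // r) = (\<Sum>Y \<in> B // s. card {X \<in> A // r. \<pi> ` X \<subseteq> Y})"
proof -
  have "A // r = (\<Union>Y \<in> B // s. {X \<in> A // r. \<pi> ` X \<subseteq> Y})"
  proof (intro equalityI subsetI)
    fix X assume X: "X \<in> A // r"
    then obtain a where a: "a \<in> A" "X = r `` {a}" by (auto elim: quotientE)
    then have "\<pi> ` X \<subseteq> s `` {\<pi> a}" using resp by auto
    moreover have "s `` {\<pi> a} \<in> B // s" using into[OF a(1)] by (rule quotientI)
    ultimately show "X \<in> (\<Union>Y \<in> B // s. {X \<in> A // r. \<pi> ` X \<subseteq> Y})" using X by blast
  qed blast
  also have "card \<dots> = (\<Sum>Y \<in> B // s. card {X \<in> A // r. \<pi> ` X \<subseteq> Y})"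
  proof (rule card_UN_disjoint)
    show "finite (B // s)" using B by (simp add: finite_quotient equiv_def)
    show "\<forall>Y \<in> B // s. finite {X \<in> A // r. \<pi> ` X \<subseteq> Y}"
      using A by (simp add: finite_quotient equiv_def)
    show "\<forall>Y \<in> B // s. \<forall>Y' \<in> B // s. Y \<noteq> Y' \<longrightarrow>
        {X \<in> A // r. \<pi> ` X \<subseteq> Y} \<inter> {X \<in> A // r. \<pi> ` X \<subseteq> Y'} = {}"
    proof (intro ballI impI equals0I)
      fix Y Y' X assume "Y \<in> B // s" "Y' \<in> B // s" "Y \<noteq> Y'"
        and X: "X \<in> {X \<in> A // r. \<pi> ` X \<subseteq> Y} \<inter> {X \<in> A // r. \<pi> ` X \<subseteq> Y'}"
      then have "Y \<inter> Y' = {}" using quotient_disj[OF B(2)] by blast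
      moreover have "\<pi> ` X \<noteq> {}" using X in_quotient_imp_non_empty[OF A(2)] by auto
      ultimately show False using X by blast
    qed
  qed
  finally show ?thesis .
qed

lemma card_quotient_bij_betw:
  assumes F: "bij_betw F A B" and r: "r \<subseteq> A \<times> A" and s: "s \<subseteq> B \<times> B"
    and rel: "\<And>a a'. a \<in> A \<Longrightarrow> a' \<in> A \<Longrightarrow> (a, a') \<in> r \<longleftrightarrow> (F a, F a') \<in> s"
  shows "card (B // s) = card (A // r)"
proof -
  have F_class: "F ` (r `` {a}) = s `` {F a}" if a: "a \<in> A" for a
  proof (intro equalityI subsetI)
    fix y assume "y \<in> s `` {F a}"
    moreover from this obtain a' where "a' \<in> A" "y = F a'"
      using s F by (auto simp: bij_betw_def)
    ultimately show "y \<in> F ` (r `` {a})" using rel[OF a] by auto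
  qed (use rel[OF a] r in auto)
  have "B // s = image F ` (A // r)"
    unfolding quotient_def using F_class F by (auto simp: bij_betw_def image_UN)
  moreover have "inj_on (image F) (A // r)"
    using inj_on_image_Pow[of F A] F r
    by (auto simp: bij_betw_def quotient_def intro: inj_on_subset)
  ultimately show ?thesis by (simp add: card_image)
qed

lemma card_image_eq_card_quotient:
  assumes E: "equiv A E" and ker: "\<And>a a'. a \<in> A \<Longrightarrow> a' \<in> A \<Longrightarrow> f a = f a' \<longleftrightarrow> (a, a') \<in> E"
  shows "card (f ` A) = card (A // E)"
proof -
  have "{a' \<in> A. f a' = f a} = E `` {a}" if "a \<in> A" for a
  proof (intro equalityI subsetI)
    fix a' assume "a' \<in> E `` {a}"
    then have "a' \<in> A" "(a, a') \<in> E" using equiv_type[OF E] by auto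
    then show "a' \<in> {a' \<in> A. f a' = f a}" using ker[OF that, of a'] by simp
  next
    fix a' assume "a' \<in> {a' \<in> A. f a' = f a}"
    then show "a' \<in> E `` {a}" using ker[OF that, of a'] by simp
  qed
  then have "bij_betw (\<lambda>y. {a \<in> A. f a = y}) (f ` A) (A // E)"
    by (intro bij_betw_imageI inj_onI) (auto simp: quotient_def)
  then show ?thesis by (rule bij_betw_same_card)
qed

section \<open>Normal forms of global maps\<close>

definition word_config :: "int set \<Rightarrow> bool list \<Rightarrow> config" where
  "word_config M w j = (case map_of (zip (sorted_list_of_set M) w) j of None \<Rightarrow> False | Some b \<Rightarrow> b)"

lemma word_config_nth:
  assumes "finite M" "length w = card M" "k < card M"
  shows "word_config M w (sorted_list_of_set M ! k) = w ! k"
  using assms map_of_zip_nth[of "sorted_list_of_set M" w k]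
  by (simp add: word_config_def)

lemma map_word_config:
  assumes "finite M" "length w = card M"
  shows "map (word_config M w) (sorted_list_of_set M) = w"
  by (rule nth_equalityI) (use assms word_config_nth in auto)

lemma word_config_map:
  assumes "finite M" "j \<in> M"
  shows "word_config M (map x (sorted_list_of_set M)) j = x j"
proof -
  obtain k where k: "k < card M" "sorted_list_of_set M ! k = j"
    using assms by (metis in_set_conv_nth length_sorted_list_of_set set_sorted_list_of_set)
  then show ?thesis using word_config_nth[of M "map x (sorted_list_of_set M)" k] assms by simp
qed

lemma map_fun_upd_nth:
  assumes "distinct L" "k < length L"
  shows "map (x(L ! k := v)) L = (map x L)[k := v]"
  by (rule nth_equalityI) (use assms in \<open>auto simp: nth_list_update nth_eq_iff_index_eq\<close>)

lemma Phi_at_0: "Phi M f x 0 = f (map x (sorted_list_of_set M))"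
  by (simp add: Phi_def)

lemma Phi_shift_origin: "Phi M f x i = Phi M f (\<lambda>j. x (i + j)) 0"
  by (simp add: Phi_def)

lemma Phi_cong_on_nbhd:
  assumes "finite M" "\<And>j. j \<in> M \<Longrightarrow> x j = y j"
  shows "Phi M f x 0 = Phi M f y 0"
proof -
  have "map x (sorted_list_of_set M) = map y (sorted_list_of_set M)"
    using assms by (intro map_cong) auto
  then show ?thesis by (simp only: Phi_at_0)
qed

definition essential_cells :: "gmap \<Rightarrow> int set" where
  "essential_cells \<Phi> = {j. \<exists>x. \<Phi> x 0 \<noteq> \<Phi> (x(j := \<not> x j)) 0}"

lemma essential_cells_subset:
  assumes "finite M"
  shows "essential_cells (Phi M f) \<subseteq> M"
proof
  fix j assume "j \<in> essential_cells (Phi M f)"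
  then obtain x where "Phi M f x 0 \<noteq> Phi M f (x(j := \<not> x j)) 0"
    by (auto simp: essential_cells_def)
  with Phi_cong_on_nbhd[OF assms, of x "x(j := \<not> x j)"] show "j \<in> M" by fastforce
qed

lemma Phi_cong_essential_cells:
  assumes M: "finite M" and agree: "\<And>j. j \<in> essential_cells (Phi M f) \<Longrightarrow> x j = y j"
  shows "Phi M f x 0 = Phi M f y 0"
proof -
  let ?E = "essential_cells (Phi M f)"
  (* make x agree with y on the inessential cells D of M, one cell at a time *)
  have "Phi M f x 0 = Phi M f y 0"
    if "finite D" "\<forall>j\<in>M - D. x j = y j" "D \<inter> ?E = {}" for D x y
    using that
  proof (induction D arbitrary: x rule: finite_induct)
    case empty
    then show ?case by (intro Phi_cong_on_nbhd[OF M]) blast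
  next
    case (insert d D)
    have "Phi M f (x(d := y d)) 0 = Phi M f y 0"
      using insert by (intro insert.IH) auto
    moreover have "Phi M f x 0 = Phi M f (x(d := y d)) 0"
    proof (cases "x d = y d")
      case False
      then have "x(d := y d) = x(d := \<not> x d)" by auto
      moreover have "d \<notin> ?E" using insert.prems by blast
      ultimately show ?thesis unfolding essential_cells_def by auto
    qed (simp add: fun_upd_idem)
    ultimately show ?case by simp
  qed
  from this[of "M - ?E"] show ?thesis using M agree by blast
qed

lemma essential_cells_Phi_irreducible:
  assumes M: "finite M" and f: "f \<in> Lbar (card M)"
  shows "essential_cells (Phi M f) = M"
proof
  show "M \<subseteq> essential_cells (Phi M f)"
  proof
    fix j assume "j \<in> M"
    then obtain k where k: "k < card M" "sorted_list_of_set M ! k = j"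
      using M by (metis in_set_conv_nth length_sorted_list_of_set set_sorted_list_of_set)
    from f k obtain w where w: "length w = card M" "f w \<noteq> f (w[k := \<not> w ! k])"
      by (auto simp: Lbar_def irreducible_rule_def)
    define x where "x = word_config M w"
    have "map x (sorted_list_of_set M) = w"
      using map_word_config[OF M w(1)] by (simp add: x_def)
    moreover have "map (x(j := \<not> x j)) (sorted_list_of_set M) = w[k := \<not> w ! k]"
      using map_fun_upd_nth[of "sorted_list_of_set M" k x] k M word_config_nth[OF M w(1) k(1)]
      by (simp add: x_def map_word_config[OF M w(1)])
    ultimately have "Phi M f x 0 \<noteq> Phi M f (x(j := \<not> x j)) 0"
      using w(2) by (simp add: Phi_at_0)
    then show "j \<in> essential_cells (Phi M f)" unfolding essential_cells_def by blast
  qed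
qed (rule essential_cells_subset[OF M])

lemma Phi_rule_inj:
  assumes M: "finite M" and f: "f \<in> rules (card M)" and g: "g \<in> rules (card M)"
    and eq: "Phi M f = Phi M g"
  shows "f = g"
proof
  fix w :: "bool list"
  show "f w = g w"
  proof (cases "length w = card M")
    case True
    then show ?thesis
      using fun_cong[OF fun_cong[OF eq, of "word_config M w"], of 0]
      by (simp add: Phi_at_0 map_word_config[OF M])
  qed (use f g in \<open>simp add: rules_def\<close>)
qed

lemma Phi_irreducible_inj:
  assumes "finite M" "finite M'" "f \<in> Lbar (card M)" "f' \<in> Lbar (card M')"
    and eq: "Phi M f = Phi M' f'"
  shows "M = M'" "f = f'"
proof -
  show "M = M'"
    using essential_cells_Phi_irreducible[OF assms(1,3)]
      essential_cells_Phi_irreducible[OF assms(2,4)] eq by simp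
  then show "f = f'" using Phi_rule_inj[of M f f'] assms by (simp add: Lbar_def)
qed

definition reduced_rule :: "gmap \<Rightarrow> rule" where
  "reduced_rule \<Phi> w =
     (length w = card (essential_cells \<Phi>) \<and> \<Phi> (word_config (essential_cells \<Phi>) w) 0)"

lemma reduced_rule_at_essential_cells:
  assumes M: "finite M"
  shows "reduced_rule (Phi M f) (map x (sorted_list_of_set (essential_cells (Phi M f))))
    = Phi M f x 0"
proof -
  have E: "finite (essential_cells (Phi M f))"
    using essential_cells_subset[OF M] M finite_subset by blast
  show ?thesis
    unfolding reduced_rule_def
    by (simp, rule Phi_cong_essential_cells[OF M]) (simp add: word_config_map[OF E])
qed

lemma Phi_reduced_rule:
  assumes "finite M"
  shows "Phi (essential_cells (Phi M f)) (reduced_rule (Phi M f)) = Phi M f"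
  using reduced_rule_at_essential_cells[OF assms]
  by (intro ext) (simp add: Phi_def Phi_shift_origin[of M f])

lemma reduced_rule_irreducible:
  assumes M: "finite M"
  shows "reduced_rule (Phi M f) \<in> Lbar (card (essential_cells (Phi M f)))"
  unfolding Lbar_def irreducible_rule_def
proof (intro CollectI conjI allI impI)
  let ?E = "essential_cells (Phi M f)" and ?g = "reduced_rule (Phi M f)"
  have E: "finite ?E" using essential_cells_subset[OF M] M finite_subset by blast
  show "?g \<in> rules (card ?E)" by (simp add: rules_def reduced_rule_def)
  fix k assume k: "k < card ?E"
  define j where "j = sorted_list_of_set ?E ! k"
  have "j \<in> ?E" using nth_mem[of k "sorted_list_of_set ?E"] k E by (simp add: j_def)
  then obtain x where x: "Phi M f x 0 \<noteq> Phi M f (x(j := \<not> x j)) 0"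
    by (auto simp: essential_cells_def)
  define w where "w = map x (sorted_list_of_set ?E)"
  have "map (x(j := \<not> x j)) (sorted_list_of_set ?E) = w[k := \<not> w ! k]"
    using map_fun_upd_nth[of "sorted_list_of_set ?E" k x] k E by (simp add: w_def j_def)
  then have "?g (w[k := \<not> w ! k]) = Phi M f (x(j := \<not> x j)) 0"
    using reduced_rule_at_essential_cells[OF M, of f "x(j := \<not> x j)"] by (simp only:)
  moreover have "?g w = Phi M f x 0"
    using reduced_rule_at_essential_cells[OF M, of f x] by (simp only: w_def)
  ultimately have "?g w \<noteq> ?g (w[k := \<not> w ! k])" using x by simp
  moreover have "length w = card ?E" by (simp add: w_def)
  ultimately show "\<exists>w. length w = card ?E \<and> ?g w \<noteq> ?g (w[k := \<not> w ! k])" by blast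
qed

lemma Phi_in_G2:
  assumes N: "finite N" and MN: "M \<subseteq> N"
  shows "Phi M g \<in> G2 N"
proof -
  have M: "finite M" using N MN finite_subset by blast
  define f where "f w = (length w = card N \<and> Phi M g (word_config N w) 0)" for w
  have "Phi N f x i = Phi M g x i" for x i
  proof -
    have "Phi N f x i = Phi M g (word_config N (map (\<lambda>j. x (i + j)) (sorted_list_of_set N))) 0"
      by (simp add: Phi_def f_def)
    also have "\<dots> = Phi M g x i"
      by (subst Phi_shift_origin, rule Phi_cong_on_nbhd[OF M]) (use word_config_map[OF N] MN in auto)
    finally show ?thesis .
  qed
  moreover have "f \<in> rules (card N)" by (simp add: rules_def f_def)
  ultimately show ?thesis unfolding G2_def by (auto intro!: exI[of _ f])
qed

section \<open>The action of S_2 on local rules\<close>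

lemma hat_c_rule_rules: "hat_c_rule m f \<in> rules m"
  by (simp add: rules_def hat_c_rule_def)

lemma hat_r_rule_rules: "hat_r_rule m f \<in> rules m"
  by (simp add: rules_def hat_r_rule_def)

lemma hat_c_rule_involution: "f \<in> rules m \<Longrightarrow> hat_c_rule m (hat_c_rule m f) = f"
  by (auto simp: rules_def hat_c_rule_def fun_eq_iff comp_def)

lemma hat_r_rule_involution: "f \<in> rules m \<Longrightarrow> hat_r_rule m (hat_r_rule m f) = f"
  by (auto simp: rules_def hat_r_rule_def fun_eq_iff)

lemma hat_c_hat_r_rule_commute: "hat_c_rule m (hat_r_rule m f) = hat_r_rule m (hat_c_rule m f)"
  by (auto simp: hat_r_rule_def hat_c_rule_def fun_eq_iff rev_map)

lemmas rule_involution_simps =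
  hat_c_rule_involution hat_r_rule_involution hat_c_rule_rules hat_r_rule_rules

lemma hat_c_rule_Lbar:
  assumes "f \<in> Lbar m"
  shows "hat_c_rule m f \<in> Lbar m"
  unfolding Lbar_def irreducible_rule_def
proof (intro CollectI conjI allI impI)
  show "hat_c_rule m f \<in> rules m" by (rule hat_c_rule_rules)
  fix i assume i: "i < m"
  from assms i obtain w where w: "length w = m" "f w \<noteq> f (w[i := \<not> w ! i])"
    by (auto simp: Lbar_def irreducible_rule_def)
  have "map Not ((map Not w)[i := \<not> map Not w ! i]) = w[i := \<not> w ! i]"
    using i w(1) by (simp add: map_update comp_def)
  then show "\<exists>w. length w = m \<and> hat_c_rule m f w \<noteq> hat_c_rule m f (w[i := \<not> w ! i])"
    using w by (intro exI[of _ "map Not w"]) (simp add: hat_c_rule_def comp_def)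
qed

lemma hat_r_rule_Lbar:
  assumes "f \<in> Lbar m"
  shows "hat_r_rule m f \<in> Lbar m"
  unfolding Lbar_def irreducible_rule_def
proof (intro CollectI conjI allI impI)
  show "hat_r_rule m f \<in> rules m" by (rule hat_r_rule_rules)
  fix i assume i: "i < m"
  define i' where "i' = m - i - 1"
  have "i' < m" using i by (simp add: i'_def)
  with assms obtain w where w: "length w = m" "f w \<noteq> f (w[i' := \<not> w ! i'])"
    by (auto simp: Lbar_def irreducible_rule_def)
  have "rev ((rev w)[i := \<not> rev w ! i]) = w[i' := \<not> w ! i']"
    using i w(1) rev_update[of i "rev w"] by (simp add: rev_nth i'_def)
  then show "\<exists>w. length w = m \<and> hat_r_rule m f w \<noteq> hat_r_rule m f (w[i := \<not> w ! i])"
    using w by (intro exI[of _ "rev w"]) (simp add: hat_r_rule_def)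
qed

lemma Lbar_rules: "f \<in> Lbar m \<Longrightarrow> f \<in> rules m"
  by (simp add: Lbar_def)

lemma act_Lbar: "f \<in> Lbar m \<Longrightarrow> act m \<alpha> f \<in> Lbar m"
  by (cases \<alpha>) (auto intro: hat_c_rule_Lbar hat_r_rule_Lbar)

lemma act_rules: "f \<in> rules m \<Longrightarrow> act m \<alpha> f \<in> rules m"
  by (cases \<alpha>) (simp_all add: rule_involution_simps)

lemma act_involution: "f \<in> rules m \<Longrightarrow> act m \<alpha> (act m \<alpha> f) = f"
  by (cases \<alpha>) (simp_all add: hat_c_hat_r_rule_commute rule_involution_simps)

lemma act_commute: "f \<in> rules m \<Longrightarrow> act m \<alpha> (act m \<beta> f) = act m \<beta> (act m \<alpha> f)"
  by (cases \<alpha>; cases \<beta>) (simp_all add: hat_c_hat_r_rule_commute rule_involution_simps)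

lemma act_act: "f \<in> rules m \<Longrightarrow> \<exists>\<gamma>. act m \<alpha> (act m \<beta> f) = act m \<gamma> f"
  by (cases \<alpha>; cases \<beta>)
     (simp_all add: hat_c_hat_r_rule_commute rule_involution_simps, (metis act.simps)+)

lemma act_eq_iff: "f \<in> rules m \<Longrightarrow> g \<in> rules m \<Longrightarrow> act m \<alpha> f = act m \<alpha> g \<longleftrightarrow> f = g"
  by (metis act_involution)

lemma stab_act:
  assumes f: "f \<in> rules m"
  shows "stab m (act m \<alpha> f) = stab m f"
proof -
  have "act m \<beta> (act m \<alpha> f) = act m \<alpha> f \<longleftrightarrow> act m \<beta> f = f" for \<beta>
    using act_eq_iff[OF act_rules[OF f] f, of \<alpha> \<beta>] by (simp add: act_commute[OF f])
  then show ?thesis by (auto simp: stab_def)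
qed

lemma finite_rules: "finite (rules m)"
proof -
  have "rules m \<subseteq> (\<lambda>S w. w \<in> S) ` Pow {w :: bool list. length w = m}"
  proof
    fix f assume "f \<in> rules m"
    then have "f = (\<lambda>w. w \<in> {w. length w = m \<and> f w})" by (auto simp: rules_def fun_eq_iff)
    then show "f \<in> (\<lambda>S w. w \<in> S) ` Pow {w :: bool list. length w = m}" by blast
  qed
  moreover have "finite {w :: bool list. length w = m}"
    using finite_lists_length_eq[of "UNIV :: bool set" m] by simp
  ultimately show ?thesis by (meson finite_Pow_iff finite_imageI finite_subset)
qed

lemma finite_Lbar: "finite (Lbar m)"
  using finite_rules by (rule finite_subset[rotated]) (auto simp: Lbar_def)

lemma orbrel_iff: "f \<in> Lbar m \<Longrightarrow> (f, g) \<in> orbrel m \<longleftrightarrow> (\<exists>\<alpha>. g = act m \<alpha> f)"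
  by (auto simp: orbrel_def act_Lbar)

lemma equiv_orbrel: "equiv (Lbar m) (orbrel m)"
proof (rule equivI)
  show "refl_on (Lbar m) (orbrel m)"
    by (rule refl_onI) (auto simp: orbrel_def intro: exI[of _ S1])
  show "sym (orbrel m)"
    by (rule symI) (auto simp: orbrel_def dest: Lbar_rules intro: act_involution[symmetric])
  show "trans (orbrel m)"
    by (rule transI) (auto simp: orbrel_def dest: Lbar_rules act_act)
qed (auto simp: orbrel_def)

definition c_orbrel :: "nat \<Rightarrow> (rule \<times> rule) set" where
  "c_orbrel m = {(f, g). f \<in> Lbar m \<and> g \<in> Lbar m \<and> (g = f \<or> g = hat_c_rule m f)}"

lemma equiv_c_orbrel: "equiv (Lbar m) (c_orbrel m)"
proof (rule equivI)
  show "refl_on (Lbar m) (c_orbrel m)" by (rule refl_onI) (auto simp: c_orbrel_def)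
  show "sym (c_orbrel m)"
    by (rule symI) (auto simp: c_orbrel_def hat_c_rule_involution dest: Lbar_rules)
  show "trans (c_orbrel m)"
    by (rule transI) (auto simp: c_orbrel_def hat_c_rule_involution dest: Lbar_rules)
qed (auto simp: c_orbrel_def)

lemma c_orbrel_subset_orbrel: "c_orbrel m \<subseteq> orbrel m"
  unfolding c_orbrel_def orbrel_def by (force intro: exI[of _ S1] exI[of _ Sc])

lemma c_orbits_in_orbit:
  assumes f: "f \<in> Lbar m"
  shows "{X \<in> Lbar m // c_orbrel m. X \<subseteq> orbrel m `` {f}}
    = {c_orbrel m `` {f}, c_orbrel m `` {hat_r_rule m f}}"
proof (intro equalityI subsetI)
  fix X assume "X \<in> {X \<in> Lbar m // c_orbrel m. X \<subseteq> orbrel m `` {f}}"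
  then obtain g where X: "X = c_orbrel m `` {g}" "g \<in> Lbar m" and "X \<subseteq> orbrel m `` {f}"
    by (auto elim: quotientE)
  moreover have "g \<in> X" using equiv_class_self[OF equiv_c_orbrel] X by simp
  ultimately obtain \<alpha> where g: "g = act m \<alpha> f" using orbrel_iff[OF f] by blast
  have "(f, g) \<in> c_orbrel m \<or> (hat_r_rule m f, g) \<in> c_orbrel m"
    using f X(2) hat_r_rule_Lbar[OF f] g
    by (cases \<alpha>) (auto simp: c_orbrel_def hat_c_hat_r_rule_commute)
  then show "X \<in> {c_orbrel m `` {f}, c_orbrel m `` {hat_r_rule m f}}"
    using equiv_class_eq[OF equiv_c_orbrel] X(1) by blast
next
  have "orbrel m `` {hat_r_rule m f} = orbrel m `` {f}"
    using f hat_r_rule_Lbar[OF f]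
    by (intro equiv_class_eq[OF equiv_orbrel, symmetric]) (auto simp: orbrel_def intro: exI[of _ Sr])
  then have "c_orbrel m `` {h} \<subseteq> orbrel m `` {f}" if "h \<in> {f, hat_r_rule m f}" for h
    using that c_orbrel_subset_orbrel by blast
  moreover have "c_orbrel m `` {h} \<in> Lbar m // c_orbrel m" if "h \<in> {f, hat_r_rule m f}" for h
    using that f hat_r_rule_Lbar[OF f] by (auto intro: quotientI)
  ultimately show "X \<in> {X \<in> Lbar m // c_orbrel m. X \<subseteq> orbrel m `` {f}}"
    if "X \<in> {c_orbrel m `` {f}, c_orbrel m `` {hat_r_rule m f}}" for X
    using that by blast
qed

lemma stab_without_r_iff:
  assumes "f \<in> rules m"
  shows "stab m f \<in> {{S1}, {S1, Sc}} \<longleftrightarrow> hat_r_rule m f \<noteq> f \<and> hat_r_rule m f \<noteq> hat_c_rule m f"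
proof -
  have "hat_r_rule m (hat_c_rule m f) = f \<longleftrightarrow> hat_r_rule m f = hat_c_rule m f"
    using assms by (metis hat_c_hat_r_rule_commute rule_involution_simps)
  moreover have "U = V \<longleftrightarrow> (\<forall>\<alpha>. \<alpha> \<in> U \<longleftrightarrow> \<alpha> \<in> V)" for U V :: "S2 set" by blast
  moreover have "(\<forall>\<alpha>. P \<alpha>) \<longleftrightarrow> P S1 \<and> P Sr \<and> P Sc \<and> P Src" for P by (metis S2.exhaust)
  ultimately show ?thesis by (auto simp: stab_def)
qed

lemma card_c_orbits_in_orbit:
  assumes f: "f \<in> Lbar m"
  shows "card {X \<in> Lbar m // c_orbrel m. X \<subseteq> orbrel m `` {f}}
    = (if stab m f \<in> {{S1}, {S1, Sc}} then 2 else 1)"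
proof -
  have "c_orbrel m `` {f} = c_orbrel m `` {hat_r_rule m f} \<longleftrightarrow> (f, hat_r_rule m f) \<in> c_orbrel m"
    by (rule eq_equiv_class_iff[OF equiv_c_orbrel f hat_r_rule_Lbar[OF f]])
  also have "\<dots> \<longleftrightarrow> \<not> stab m f \<in> {{S1}, {S1, Sc}}"
    using f hat_r_rule_Lbar[OF f] stab_without_r_iff[OF Lbar_rules[OF f]]
    by (auto simp: c_orbrel_def)
  finally show ?thesis unfolding c_orbits_in_orbit[OF f] by auto
qed

lemma orbit_in_tbar_iff:
  assumes f: "f \<in> Lbar m"
  shows "orbrel m `` {f} \<in> tbar m U \<longleftrightarrow> stab m f = U"
proof
  assume "orbrel m `` {f} \<in> tbar m U"
  then obtain g where g: "orbrel m `` {f} = orbrel m `` {g}" "g \<in> Lbar m" "stab m g = U"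
    by (auto simp: tbar_def)
  then obtain \<alpha> where "g = act m \<alpha> f"
    using eq_equiv_class_iff[OF equiv_orbrel f g(2)] orbrel_iff[OF f] by blast
  then show "stab m f = U" using g(3) stab_act[OF Lbar_rules[OF f]] by simp
qed (use f in \<open>auto simp: tbar_def\<close>)

lemma tbar_disjoint:
  assumes "U \<noteq> V"
  shows "tbar m U \<inter> tbar m V = {}"
proof (intro equals0I)
  fix X assume "X \<in> tbar m U \<inter> tbar m V"
  then obtain f where "f \<in> Lbar m" "X = orbrel m `` {f}" "stab m f = U" "X \<in> tbar m V"
    by (auto simp: tbar_def)
  then show False using orbit_in_tbar_iff[of f m V] assms by simp
qed


lemma tbar_subset_quotient: "tbar m U \<subseteq> Lbar m // orbrel m"
  by (auto simp: tbar_def intro: quotientI)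

text \<open>The \<open>S_2\<close>-orbit of \<open>f\<close> consists of the \<open>c\<close>-orbits of \<open>f\<close> and of \<open>r f\<close>, which are
  distinct exactly when the stabiliser of \<open>f\<close> is \<open><1>\<close> or \<open><c>\<close>.\<close>
lemma card_c_orbits:
  "card (Lbar m // c_orbrel m)
     = card (Lbar m // orbrel m) + card (tbar m {S1}) + card (tbar m {S1, Sc})"
proof -
  let ?Q = "Lbar m // orbrel m" and ?T = "tbar m {S1} \<union> tbar m {S1, Sc}"
  have fin: "finite ?Q" using finite_quotient[OF finite_Lbar] equiv_orbrel by (simp add: equiv_def)
  have "card (Lbar m // c_orbrel m) = (\<Sum>Orb \<in> ?Q. card {X \<in> Lbar m // c_orbrel m. id ` X \<subseteq> Orb})"
    using c_orbrel_subset_orbrel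
    by (intro card_quotient_sum_fibres finite_Lbar equiv_c_orbrel equiv_orbrel) auto
  also have "\<dots> = (\<Sum>Orb \<in> ?Q. if Orb \<in> ?T then 2 else 1)"
  proof (rule sum.cong[OF refl])
    fix Orb assume "Orb \<in> ?Q"
    then obtain f where f: "Orb = orbrel m `` {f}" "f \<in> Lbar m" by (auto elim: quotientE)
    then have "Orb \<in> ?T \<longleftrightarrow> stab m f \<in> {{S1}, {S1, Sc}}"
      using orbit_in_tbar_iff[OF f(2)] by simp
    then show "card {X \<in> Lbar m // c_orbrel m. id ` X \<subseteq> Orb} = (if Orb \<in> ?T then 2 else 1)"
      using card_c_orbits_in_orbit[OF f(2)] f(1) by (simp only: image_id id_apply)
  qed
  also have "\<dots> = (\<Sum>Orb \<in> ?Q. 1) + (\<Sum>Orb \<in> ?Q. if Orb \<in> ?T then 1 else 0)"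
    by (subst sum.distrib[symmetric]) (intro sum.cong, auto)
  also have "\<dots> = card ?Q + card (?Q \<inter> ?T)"
    using fin by (simp add: sum.If_cases Int_def)
  also have "?Q \<inter> ?T = ?T" using tbar_subset_quotient by blast
  also have "card ?T = card (tbar m {S1}) + card (tbar m {S1, Sc})"
  proof (rule card_Un_disjoint)
    show "finite (tbar m {S1})" "finite (tbar m {S1, Sc})"
      using fin tbar_subset_quotient finite_subset by blast+
    show "tbar m {S1} \<inter> tbar m {S1, Sc} = {}" by (rule tbar_disjoint) simp
  qed
  finally show ?thesis by simp
qed

section \<open>Rational affine maps between finite sets of integers\<close>

definition aff_image :: "rat \<Rightarrow> rat \<Rightarrow> int set \<Rightarrow> int set" where
  "aff_image s t M = {i. \<exists>j\<in>M. of_int i = s * of_int j + t}"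

definition aff_integral :: "rat \<Rightarrow> rat \<Rightarrow> int set \<Rightarrow> bool" where
  "aff_integral s t M \<longleftrightarrow> (\<forall>j\<in>M. s * of_int j + t \<in> \<int>)"

text \<open>Only meaningful where \<open>s j + t\<close> is an integer; elsewhere it is the floor.\<close>
definition aff_int :: "rat \<Rightarrow> rat \<Rightarrow> int \<Rightarrow> int" where
  "aff_int s t j = \<lfloor>s * of_int j + t\<rfloor>"

definition aff_equiv :: "int set \<Rightarrow> int set \<Rightarrow> rat \<Rightarrow> rat \<Rightarrow> bool" where
  "aff_equiv M M' s t \<longleftrightarrow> s \<noteq> 0 \<and> aff_integral s t M \<and> M' = aff_image s t M"

lemma smul_eq_aff_image: "smul v M = aff_image v 0 M"
  by (simp add: smul_def aff_image_def)

lemma int_scalable_iff_aff_integral: "int_scalable v M \<longleftrightarrow> aff_integral v 0 M"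
  by (simp add: int_scalable_def aff_integral_def)

lemma aff_integral_Ints: "s \<in> \<int> \<Longrightarrow> t \<in> \<int> \<Longrightarrow> aff_integral s t M"
  by (auto simp: aff_integral_def)

lemma of_int_aff_int: "aff_integral s t M \<Longrightarrow> j \<in> M \<Longrightarrow> of_int (aff_int s t j) = s * of_int j + t"
  by (auto simp: aff_integral_def aff_int_def elim!: Ints_cases)

lemma aff_image_eq_image:
  assumes "aff_integral s t M"
  shows "aff_image s t M = aff_int s t ` M"
proof
  show "aff_image s t M \<subseteq> aff_int s t ` M"
  proof
    fix i assume "i \<in> aff_image s t M"
    then obtain j where j: "j \<in> M" "of_int i = s * of_int j + t" by (auto simp: aff_image_def)
    then have "i = aff_int s t j" by (simp add: aff_int_def flip: j(2))
    with j show "i \<in> aff_int s t ` M" by auto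
  qed
  show "aff_int s t ` M \<subseteq> aff_image s t M"
    using of_int_aff_int[OF assms] by (auto simp: aff_image_def)
qed

lemma aff_int_less_iff:
  assumes "aff_integral s t M" "j \<in> M" "j' \<in> M"
  shows "aff_int s t j < aff_int s t j' \<longleftrightarrow> s * of_int j < s * of_int j'"
proof -
  have "aff_int s t j < aff_int s t j' \<longleftrightarrow> (of_int (aff_int s t j) :: rat) < of_int (aff_int s t j')"
    by linarith
  then show ?thesis using of_int_aff_int[OF assms(1)] assms(2,3) by simp
qed

lemma inj_on_aff_int:
  assumes "aff_integral s t M" "s \<noteq> 0"
  shows "inj_on (aff_int s t) M"
proof
  fix j j' assume "j \<in> M" "j' \<in> M" "aff_int s t j = aff_int s t j'"
  then have "s * of_int j + t = s * of_int j' + t" using of_int_aff_int[OF assms(1)] by metis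
  then show "j = j'" using assms(2) by simp
qed

lemma card_aff_image: "aff_integral s t M \<Longrightarrow> s \<noteq> 0 \<Longrightarrow> card (aff_image s t M) = card M"
  by (simp add: aff_image_eq_image card_image inj_on_aff_int)

lemma finite_aff_image: "aff_integral s t M \<Longrightarrow> finite M \<Longrightarrow> finite (aff_image s t M)"
  by (simp add: aff_image_eq_image)

lemma aff_image_aff_image:
  assumes "aff_integral s t M"
  shows "aff_image s' t' (aff_image s t M) = aff_image (s' * s) (s' * t + t') M"
proof
  show "aff_image s' t' (aff_image s t M) \<subseteq> aff_image (s' * s) (s' * t + t') M"
    by (auto simp: aff_image_def algebra_simps)
  show "aff_image (s' * s) (s' * t + t') M \<subseteq> aff_image s' t' (aff_image s t M)"
  proof
    fix i assume "i \<in> aff_image (s' * s) (s' * t + t') M"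
    then obtain j where j: "j \<in> M" "of_int i = s' * s * of_int j + (s' * t + t')"
      by (auto simp: aff_image_def)
    then have "of_int i = s' * of_int (aff_int s t j) + t'"
      using of_int_aff_int[OF assms j(1)] by (simp add: algebra_simps)
    moreover have "aff_int s t j \<in> aff_image s t M" using j(1) aff_image_eq_image[OF assms] by auto
    ultimately show "i \<in> aff_image s' t' (aff_image s t M)" by (auto simp: aff_image_def)
  qed
qed

lemma aff_integral_aff_image:
  assumes "aff_integral s t M"
  shows "aff_integral s' t' (aff_image s t M) \<longleftrightarrow> aff_integral (s' * s) (s' * t + t') M"
proof -
  have "s' * of_int (aff_int s t j) + t' = s' * s * of_int j + (s' * t + t')" if "j \<in> M" for j
    using of_int_aff_int[OF assms that] by (simp add: algebra_simps)
  then show ?thesis using aff_image_eq_image[OF assms] by (auto simp: aff_integral_def add.assoc)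
qed

lemma aff_equiv_refl: "aff_equiv M M 1 0"
  by (auto simp: aff_equiv_def aff_integral_def aff_image_def)

lemma aff_equiv_trans:
  "aff_equiv M M' s t \<Longrightarrow> aff_equiv M' M'' s' t' \<Longrightarrow> aff_equiv M M'' (s' * s) (s' * t + t')"
  by (auto simp: aff_equiv_def aff_image_aff_image aff_integral_aff_image)

lemma aff_equiv_sym:
  assumes "aff_equiv M M' s t"
  shows "aff_equiv M' M (1 / s) (- t / s)"
proof -
  have s: "s \<noteq> 0" and int: "aff_integral s t M" and M': "M' = aff_image s t M"
    using assms by (auto simp: aff_equiv_def)
  have "aff_image (1 / s * s) (1 / s * t + - t / s) M = M"
    using s by (simp add: aff_image_def)
  moreover have "aff_integral (1 / s * s) (1 / s * t + - t / s) M"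
    using s by (simp add: aff_integral_def)
  ultimately show ?thesis
    using s by (simp add: aff_equiv_def M' aff_image_aff_image[OF int] aff_integral_aff_image[OF int])
qed

lemma aff_equiv_card: "aff_equiv M M' s t \<Longrightarrow> card M' = card M"
  by (simp add: aff_equiv_def card_aff_image)

lemma aff_equiv_finite: "aff_equiv M M' s t \<Longrightarrow> finite M \<Longrightarrow> finite M'"
  by (simp add: aff_equiv_def finite_aff_image)

lemma sorted_list_of_aff_image:
  assumes M: "finite M" and int: "aff_integral s t M" and s: "s \<noteq> 0"
  shows "sorted_list_of_set (aff_image s t M)
    = (if s > 0 then id else rev) (map (aff_int s t) (sorted_list_of_set M))"
proof -
  let ?L = "(if s > 0 then id else rev) (map (aff_int s t) (sorted_list_of_set M))"
  have "sorted_wrt (\<lambda>j j'. if s > 0 then j < j' else j' < j) (map (aff_int s t) (sorted_list_of_set M))"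
    unfolding sorted_wrt_map
  proof (rule sorted_wrt_mono_rel[OF _ strict_sorted_list_of_set])
    fix j j' assume "j \<in> set (sorted_list_of_set M)" "j' \<in> set (sorted_list_of_set M)" "j < j'"
    with M s show "if s > 0 then aff_int s t j < aff_int s t j' else aff_int s t j' < aff_int s t j"
      by (simp add: aff_int_less_iff[OF int])
  qed
  then have "sorted_wrt (<) ?L" by (cases "s > 0") (simp_all add: sorted_wrt_rev)
  moreover have "set ?L = aff_image s t M" using M by (simp add: aff_image_eq_image[OF int])
  moreover have "length ?L = card (aff_image s t M)" using card_aff_image[OF int s] by simp
  ultimately show ?thesis using sorted_list_of_set_unique[OF finite_aff_image[OF int M]] by blast
qed

lemma Phi_aff_image:
  assumes M: "finite M" and int: "aff_integral s t M" and s: "s \<noteq> 0" and h: "h \<in> rules (card M)"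
  shows "Phi (aff_image s t M) (if s > 0 then h else hat_r_rule (card M) h) x i
    = Phi M h (\<lambda>j. x (i + aff_int s t j)) 0"
  using sorted_list_of_aff_image[OF assms(1-3)]
  by (simp add: Phi_def comp_def hat_r_rule_def rev_map[symmetric])

section \<open>The group generated by shift, reflection and complementation\<close>

text \<open>Every element of the group generated by \<open>\<sigma>\<close>, \<open>hat r\<close>, \<open>hat c\<close> is
  \<open>\<sigma>\<^sup>k \<circ> hat r\<^sup>a \<circ> hat c\<^sup>b\<close>.\<close>
definition sym_op :: "int \<Rightarrow> bool \<Rightarrow> bool \<Rightarrow> gmap \<Rightarrow> gmap" where
  "sym_op k a b \<Phi> =
     (\<lambda>x i. b \<noteq> \<Phi> (\<lambda>j. b \<noteq> x (if a then - j else j)) (if a then - (i + k) else i + k))"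

lemma sym_op_id: "sym_op 0 False False \<Phi> = \<Phi>"
  by (simp add: sym_op_def)

lemma sigma_g_sym_op: "sigma_g (sym_op k a b \<Phi>) = sym_op (k + 1) a b \<Phi>"
  by (auto simp: fun_eq_iff sigma_g_def shift_cfg_def sym_op_def algebra_simps)

lemma hat_c_g_sym_op: "hat_c_g (sym_op k a b \<Phi>) = sym_op k a (\<not> b) \<Phi>"
  by (auto simp: fun_eq_iff hat_c_g_def c_cfg_def sym_op_def)

lemma hat_r_g_sym_op: "hat_r_g (sym_op k a b \<Phi>) = sym_op (- k) (\<not> a) b \<Phi>"
  by (auto simp: fun_eq_iff hat_r_g_def r_cfg_def sym_op_def algebra_simps)

lemma sigma_g_inj: "sigma_g \<Phi> = sigma_g \<Psi> \<Longrightarrow> \<Phi> = \<Psi>"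
  unfolding sigma_g_def shift_cfg_def fun_eq_iff comp_def by (metis diff_add_cancel)

lemma c_cfg_involution: "c_cfg (c_cfg x) = x"
  by (simp add: fun_eq_iff c_cfg_def)

lemma r_cfg_involution: "r_cfg (r_cfg x) = x"
  by (simp add: fun_eq_iff r_cfg_def)

lemma hat_c_g_involution: "hat_c_g (hat_c_g \<Phi>) = \<Phi>"
  by (simp add: fun_eq_iff hat_c_g_def c_cfg_involution)

lemma hat_r_g_involution: "hat_r_g (hat_r_g \<Phi>) = \<Phi>"
  by (simp add: fun_eq_iff hat_r_g_def r_cfg_involution)

lemma gen_step_sym_op:
  assumes "(sym_op k a b \<Phi>, \<Psi>) \<in> gen_step \<union> gen_step\<inverse>"
  shows "\<exists>k' a' b'. \<Psi> = sym_op k' a' b' \<Phi>"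
proof -
  let ?\<Phi>' = "sym_op k a b \<Phi>"
  have "\<Psi> = sigma_g ?\<Phi>' \<or> \<Psi> = hat_r_g ?\<Phi>' \<or> \<Psi> = hat_c_g ?\<Phi>'
      \<or> ?\<Phi>' = sigma_g \<Psi> \<or> ?\<Phi>' = hat_r_g \<Psi> \<or> ?\<Phi>' = hat_c_g \<Psi>"
    using assms by (auto simp: gen_step_def)
  then show ?thesis
  proof (elim disjE)
    assume "?\<Phi>' = sigma_g \<Psi>"
    then have "sigma_g \<Psi> = sigma_g (sym_op (k - 1) a b \<Phi>)" by (simp add: sigma_g_sym_op)
    then have "\<Psi> = sym_op (k - 1) a b \<Phi>" by (rule sigma_g_inj)
    then show ?thesis by blast
  next
    assume "?\<Phi>' = hat_r_g \<Psi>"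
    then have "\<Psi> = hat_r_g ?\<Phi>'" using hat_r_g_involution by metis
    then show ?thesis unfolding hat_r_g_sym_op by blast
  next
    assume "?\<Phi>' = hat_c_g \<Psi>"
    then have "\<Psi> = hat_c_g ?\<Phi>'" using hat_c_g_involution by metis
    then show ?thesis unfolding hat_c_g_sym_op by blast
  qed (simp_all only: sigma_g_sym_op hat_r_g_sym_op hat_c_g_sym_op, blast+)
qed

lemma gcong_imp_sym_op:
  assumes "gcong \<Phi> \<Psi>"
  shows "\<exists>k a b. \<Psi> = sym_op k a b \<Phi>"
  using assms[unfolded gcong_def]
proof (induction rule: rtrancl_induct)
  case base
  show ?case using sym_op_id by metis
next
  case (step \<Psi> \<Psi>')
  then obtain k a b where "\<Psi> = sym_op k a b \<Phi>" by blast
  then show ?case using gen_step_sym_op[of k a b \<Phi> \<Psi>'] step.hyps(2) by simp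
qed

lemma gcong_sym_op: "gcong \<Phi> (sym_op k a b \<Phi>)"
proof -
  let ?R = "(gen_step \<union> gen_step\<inverse>)\<^sup>*"
  have step: "(\<Psi>, sigma_g \<Psi>) \<in> ?R" "(sigma_g \<Psi>, \<Psi>) \<in> ?R"
    "(\<Psi>, hat_r_g \<Psi>) \<in> ?R" "(\<Psi>, hat_c_g \<Psi>) \<in> ?R" for \<Psi>
    by (auto simp: gen_step_def)
  have shift: "(\<Phi>, sym_op k False False \<Phi>) \<in> ?R" for k
  proof (induction k rule: int_induct[where k = 0])
    case (step1 i)
    then show ?case using step(1)[of "sym_op i False False \<Phi>"]
      by (simp add: sigma_g_sym_op rtrancl_trans)
  next
    case (step2 i)
    then show ?case using step(2)[of "sym_op (i - 1) False False \<Phi>"]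
      by (simp add: sigma_g_sym_op rtrancl_trans)
  qed (simp add: sym_op_id)
  have unreflected: "(\<Phi>, sym_op k False b \<Phi>) \<in> ?R" for k b
    using shift[of k] step(4)[of "sym_op k False False \<Phi>"]
    by (cases b) (simp_all add: hat_c_g_sym_op rtrancl_trans)
  have "(\<Phi>, sym_op k True b \<Phi>) \<in> ?R"
    using rtrancl_trans[OF unreflected[of "- k" b] step(3)[of "sym_op (- k) False b \<Phi>"]]
    by (simp add: hat_r_g_sym_op)
  then show ?thesis using unreflected by (cases a) (simp_all add: gcong_def)
qed

definition s2_of :: "bool \<Rightarrow> bool \<Rightarrow> S2" where
  "s2_of a b = (if a then if b then Src else Sr else if b then Sc else S1)"

lemma s2_of_surj: "\<exists>a b. \<alpha> = s2_of a b"
  by (cases \<alpha>) (auto simp: s2_of_def)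

lemma act_s2_of_act_s2_of:
  "f \<in> rules m \<Longrightarrow> act m (s2_of a b) (act m (s2_of a' b') f) = act m (s2_of (a \<noteq> a') (b \<noteq> b')) f"
  by (cases a; cases b; cases a'; cases b')
     (simp_all add: s2_of_def hat_c_hat_r_rule_commute rule_involution_simps)

definition reflection_sign :: "bool \<Rightarrow> rat" where
  "reflection_sign a = (if a then -1 else 1)"

lemma aff_integral_reflection_sign: "aff_integral (reflection_sign a) (of_int k) M"
  by (simp add: aff_integral_Ints reflection_sign_def)

lemma aff_equiv_reflection_sign:
  "aff_equiv M (aff_image (reflection_sign a) (of_int k) M) (reflection_sign a) (of_int k)"

  by (simp add: aff_equiv_def aff_integral_reflection_sign) (simp add: reflection_sign_def)

lemma Phi_sym_op:
  assumes M: "finite M" and g: "g \<in> rules (card M)"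
  shows "sym_op k a b (Phi M g)
    = Phi (aff_image (reflection_sign a) (of_int k) M) (act (card M) (s2_of a b) g)"
proof (intro ext)
  fix x i
  let ?h = "act (card M) (s2_of False b) g"
  have h: "?h \<in> rules (card M)" using g by (simp add: act_rules)
  have "act (card M) (s2_of a b) g = (if reflection_sign a > 0 then ?h else hat_r_rule (card M) ?h)"
    by (simp add: s2_of_def reflection_sign_def)
  then have "Phi (aff_image (reflection_sign a) (of_int k) M) (act (card M) (s2_of a b) g) x i
      = Phi M ?h (\<lambda>j. x (i + aff_int (reflection_sign a) (of_int k) j)) 0"
    using Phi_aff_image[OF M aff_integral_reflection_sign _ h, of a k x i]
    by (simp add: reflection_sign_def)
  also have "\<dots> = sym_op k a b (Phi M g) x i"
    by (cases a; cases b)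
       (simp_all add: sym_op_def Phi_def s2_of_def hat_c_rule_def aff_int_def reflection_sign_def
         comp_def algebra_simps)
  finally show "sym_op k a b (Phi M g) x i
    = Phi (aff_image (reflection_sign a) (of_int k) M) (act (card M) (s2_of a b) g) x i" by simp
qed

section \<open>The equivalences in terms of normal forms\<close>

lemma Phi_scaled_eq_irreducible:
  assumes M: "finite M" and f: "f \<in> rules (card M)" and int: "aff_integral v 0 M" and v: "v > 0"
    and M': "finite M'" and h: "h \<in> Lbar (card M')" and eq: "Phi M f = Phi M' h"
  shows "aff_integral v 0 M'" and "Phi (aff_image v 0 M) f = Phi (aff_image v 0 M') h"
proof -
  have "M' \<subseteq> M"
    using essential_cells_Phi_irreducible[OF M' h] essential_cells_subset[OF M, of f] eq by simp
  then show int': "aff_integral v 0 M'" using int by (auto simp: aff_integral_def)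
  show "Phi (aff_image v 0 M) f = Phi (aff_image v 0 M') h"
    using Phi_aff_image[OF M int _ f] Phi_aff_image[OF M' int' _ Lbar_rules[OF h]] v eq
    by (intro ext) simp
qed

text \<open>Translating one point of \<open>M\<close> to the origin splits \<open>j \<mapsto> s j + t\<close> into a translation,
  a scaling by \<open>|s|\<close> that keeps the set integral, and an integer isometry \<open>j \<mapsto> \<plusminus>j + k\<close>.\<close>
lemma aff_equiv_factor:
  assumes "aff_equiv M M' s t"
  obtains m0 k where "aff_integral \<bar>s\<bar> 0 (aff_image 1 (of_int m0) M)"
    and "aff_image \<bar>s\<bar> 0 (aff_image 1 (of_int m0) M) = aff_image (reflection_sign (s < 0)) (of_int k) M'"
proof -
  obtain t0 m0 where st0: "aff_equiv M M' s t0" and z: "s * of_int m0 + t0 \<in> \<int>"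
  proof (cases "M = {}")
    case True
    then show ?thesis
      using that[of 0 0] assms by (simp add: aff_equiv_def aff_image_def aff_integral_def)
  next
    case False
    then obtain m0 where "m0 \<in> M" by blast
    then show ?thesis using that[of t m0] assms by (simp add: aff_equiv_def aff_integral_def)
  qed
  have s: "s \<noteq> 0" and int: "aff_integral s t0 M" and M': "M' = aff_image s t0 M"
    using st0 by (auto simp: aff_equiv_def)
  let ?\<epsilon> = "reflection_sign (s < 0)"
  have abs_s: "\<bar>s\<bar> = ?\<epsilon> * s" and \<epsilon>: "?\<epsilon> \<in> \<int>" by (simp_all add: reflection_sign_def)
  from z obtain k where k: "of_int k = ?\<epsilon> * (s * of_int m0 + t0)"
    using \<epsilon> by (metis Ints_cases Ints_mult)
  have int1: "aff_integral 1 (of_int (- m0)) M" by (simp add: aff_integral_Ints)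
  have "aff_integral \<bar>s\<bar> 0 (aff_image 1 (of_int (- m0)) M)"
    unfolding aff_integral_aff_image[OF int1] unfolding aff_integral_def
  proof
    fix j assume "j \<in> M"
    then have "?\<epsilon> * ((s * of_int j + t0) - (s * of_int m0 + t0)) \<in> \<int>"
      using int z \<epsilon> by (intro Ints_mult Ints_diff) (auto simp: aff_integral_def)
    then show "\<bar>s\<bar> * 1 * of_int j + (\<bar>s\<bar> * of_int (- m0) + 0) \<in> \<int>"
      by (simp add: abs_s algebra_simps)
  qed
  moreover have "aff_image \<bar>s\<bar> 0 (aff_image 1 (of_int (- m0)) M) = aff_image ?\<epsilon> (- of_int k) M'"
    unfolding aff_image_aff_image[OF int1] M' aff_image_aff_image[OF int]
    by (simp add: abs_s k algebra_simps)
  ultimately show ?thesis using that[of "- m0" "- k"] by simp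
qed

lemma scales_Phi_irreducible:
  assumes M: "finite M" and h: "h \<in> Lbar (card M)" and M': "finite M'" and h': "h' \<in> Lbar (card M')"
    and v: "v > 0" and "scales v (Phi M h) (Phi M' h')"
  shows "aff_equiv M M' v 0" and "h' = h"
proof -
  obtain M3 f3 where M3: "finite M3" "f3 \<in> rules (card M3)" "aff_integral v 0 M3"
    and "Phi M3 f3 = Phi M h" "Phi (aff_image v 0 M3) f3 = Phi M' h'"
    using assms(6) by (auto simp: scales_def int_scalable_iff_aff_integral smul_eq_aff_image)
  then have int: "aff_integral v 0 M" and eq: "Phi (aff_image v 0 M) h = Phi M' h'"
    using Phi_scaled_eq_irreducible[OF M3 v M h] by auto
  then have A: "aff_equiv M (aff_image v 0 M) v 0" using v by (simp add: aff_equiv_def)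
  have "aff_image v 0 M = M'" "h = h'"
    using Phi_irreducible_inj[OF aff_equiv_finite[OF A M] M' _ h' eq] h aff_equiv_card[OF A] by auto
  then show "aff_equiv M M' v 0" "h' = h" using A by simp_all
qed

lemma gsim_Phi_imp_aff_equiv:
  assumes M: "finite M" and M': "finite M'" and g: "g \<in> Lbar (card M)" and g': "g' \<in> Lbar (card M')"
    and "gsim (Phi M g) (Phi M' g')"
  shows "\<exists>s t b. aff_equiv M M' s t \<and> g' = act (card M) (s2_of (s < 0) b) g"
proof -
  obtain \<Phi>' \<Psi>' v where c1: "gcong (Phi M g) \<Phi>'" and c2: "gcong (Phi M' g') \<Psi>'"
    and v: "v > 0" and sc: "scales v \<Phi>' \<Psi>'" using assms(5) by (auto simp: gsim_def)
  from c1 c2 obtain k a b k' a' b' where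
    \<Phi>': "\<Phi>' = sym_op k a b (Phi M g)" and \<Psi>': "\<Psi>' = sym_op k' a' b' (Phi M' g')"
    using gcong_imp_sym_op[OF c1] gcong_imp_sym_op[OF c2] by blast
  define M1 where "M1 = aff_image (reflection_sign a) (of_int k) M"
  define M2 where "M2 = aff_image (reflection_sign a') (of_int k') M'"
  have A1: "aff_equiv M M1 (reflection_sign a) (of_int k)"
    and A2: "aff_equiv M' M2 (reflection_sign a') (of_int k')"
    unfolding M1_def M2_def by (rule aff_equiv_reflection_sign)+
  have fin: "finite M1" "finite M2" and card: "card M1 = card M" "card M2 = card M'"
    using aff_equiv_finite[OF A1 M] aff_equiv_finite[OF A2 M'] aff_equiv_card[OF A1]
      aff_equiv_card[OF A2] by simp_all
  have "scales v (Phi M1 (act (card M) (s2_of a b) g)) (Phi M2 (act (card M') (s2_of a' b') g'))"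
    using sc \<Phi>' \<Psi>' Phi_sym_op[OF M Lbar_rules[OF g]] Phi_sym_op[OF M' Lbar_rules[OF g']]
    by (simp add: M1_def M2_def)
  from scales_Phi_irreducible[OF fin(1) _ fin(2) _ v this]
  have A3: "aff_equiv M1 M2 v 0"
    and eq: "act (card M') (s2_of a' b') g' = act (card M) (s2_of a b) g"
    using g g' card by (simp_all add: act_Lbar)
  define s where "s = 1 / reflection_sign a' * (v * reflection_sign a)"
  have "aff_equiv M M' s
      (1 / reflection_sign a' * (v * of_int k + 0) + - of_int k' / reflection_sign a')"
    using aff_equiv_trans[OF aff_equiv_trans[OF A1 A3] aff_equiv_sym[OF A2]] by (simp add: s_def)
  moreover have "g' = act (card M) (s2_of (s < 0) (b' \<noteq> b)) g"
  proof -
    have "s < 0 \<longleftrightarrow> a' \<noteq> a" using v by (auto simp: s_def reflection_sign_def)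
    moreover have "card M' = card M" using card aff_equiv_card[OF A3] by simp
    ultimately show ?thesis
      using eq[THEN arg_cong, of "act (card M') (s2_of a' b')"] act_involution[OF Lbar_rules[OF g']]
        act_s2_of_act_s2_of[OF Lbar_rules[OF g]] by simp
  qed
  ultimately show ?thesis by blast
qed

lemma aff_equiv_imp_gsim_Phi:
  assumes M: "finite M" and g: "g \<in> rules (card M)" and st: "aff_equiv M M' s t"
  shows "gsim (Phi M g) (Phi M' (act (card M) (s2_of (s < 0) b) g))"
proof -
  let ?\<alpha> = "s2_of (s < 0) b"
  obtain m0 k where int: "aff_integral \<bar>s\<bar> 0 (aff_image 1 (of_int m0) M)"
    and eq: "aff_image \<bar>s\<bar> 0 (aff_image 1 (of_int m0) M)
      = aff_image (reflection_sign (s < 0)) (of_int k) M'"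
    using aff_equiv_factor[OF st] by blast
  define M0 where "M0 = aff_image 1 (of_int m0) M"
  have A0: "aff_equiv M M0 1 (of_int m0)" by (simp add: M0_def aff_equiv_def aff_integral_Ints)
  have card: "card M' = card M" "card M0 = card M"
    using aff_equiv_card[OF st] aff_equiv_card[OF A0] by simp_all
  have "sym_op m0 False False (Phi M g) = Phi M0 g"
    using Phi_sym_op[OF M g, of m0 False False] by (simp add: M0_def s2_of_def reflection_sign_def)
  moreover have "sym_op k (s < 0) b (Phi M' (act (card M) ?\<alpha> g)) = Phi (aff_image \<bar>s\<bar> 0 M0) g"
    using Phi_sym_op[OF aff_equiv_finite[OF st M], of "act (card M) ?\<alpha> g" k "s < 0" b]
      act_rules[OF g] act_involution[OF g] eq card
    by (simp add: M0_def)
  moreover have "scales \<bar>s\<bar> (Phi M0 g) (Phi (aff_image \<bar>s\<bar> 0 M0) g)"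
    unfolding scales_def int_scalable_iff_aff_integral smul_eq_aff_image
    using aff_equiv_finite[OF A0 M] int g card
    by (intro exI[of _ M0] exI[of _ g]) (simp add: M0_def)
  moreover have "\<bar>s\<bar> > 0" using st by (simp add: aff_equiv_def)
  ultimately show ?thesis unfolding gsim_def using gcong_sym_op by metis
qed

lemma scong_iff_isometry: "scong M M' \<longleftrightarrow> (\<exists>a k. M' = aff_image (reflection_sign a) (of_int k) M)"
proof -
  have "(\<lambda>i. k + i) ` M = aff_image (reflection_sign False) (of_int k) M"
    "(\<lambda>i. k - i) ` M = aff_image (reflection_sign True) (of_int k) M" for k
    by (auto simp: aff_image_def reflection_sign_def add.commute simp flip: of_int_add of_int_diff)
  then show ?thesis unfolding scong_def by (metis (full_types))
qed

lemma ssim_iff_aff_equiv: "ssim M M' \<longleftrightarrow> (\<exists>s t. aff_equiv M M' s t)"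
proof
  assume "ssim M M'"
  then obtain M'' M''' v where "v > 0" "scong M M''" "scong M' M'''"
    "int_scalable v M''" "M''' = smul v M''" by (auto simp: ssim_def)
  then obtain a k a' k' where A1: "aff_equiv M M'' (reflection_sign a) (of_int k)"
    and A2: "aff_equiv M' M''' (reflection_sign a') (of_int k')" and A3: "aff_equiv M'' M''' v 0"
    using aff_equiv_reflection_sign
    by (auto simp: scong_iff_isometry aff_equiv_def int_scalable_iff_aff_integral smul_eq_aff_image)
  show "\<exists>s t. aff_equiv M M' s t"
    using aff_equiv_trans[OF aff_equiv_trans[OF A1 A3] aff_equiv_sym[OF A2]] by blast
next
  assume "\<exists>s t. aff_equiv M M' s t"
  then obtain s t where st: "aff_equiv M M' s t" by blast
  then obtain m0 k where "aff_integral \<bar>s\<bar> 0 (aff_image 1 (of_int m0) M)"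
    and "aff_image \<bar>s\<bar> 0 (aff_image 1 (of_int m0) M)
      = aff_image (reflection_sign (s < 0)) (of_int k) M'"
    using aff_equiv_factor by blast
  moreover have "scong M (aff_image 1 (of_int m0) M)"
    unfolding scong_iff_isometry
    by (rule exI[of _ False], rule exI[of _ m0]) (simp add: reflection_sign_def)
  moreover have "\<bar>s\<bar> > 0" using st by (simp add: aff_equiv_def)
  ultimately show "ssim M M'"
    unfolding ssim_def scong_iff_isometry int_scalable_iff_aff_integral smul_eq_aff_image by metis
qed

section \<open>Sets with a reflection symmetry\<close>

lemma antitone_perm_Min_Max:
  fixes f :: "'a::linorder \<Rightarrow> 'a"
  assumes R: "finite R" "R \<noteq> {}" and perm: "f ` R = R"
    and anti: "\<And>x y. x \<in> R \<Longrightarrow> y \<in> R \<Longrightarrow> x < y \<Longrightarrow> f y < f x"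
  shows "f (Min R) = Max R" and "f (Max R) = Min R"
proof -
  have anti_le: "f y \<le> f x" if "x \<in> R" "y \<in> R" "x \<le> y" for x y
    using anti[OF that(1,2)] that(3) by (metis le_less)
  have in_R: "f x \<in> R" if "x \<in> R" for x using perm that by blast
  obtain y z where y: "y \<in> R" "f y = Max R" and z: "z \<in> R" "f z = Min R"
    using Max_in[OF R] Min_in[OF R] perm by (metis imageE)
  show "f (Min R) = Max R"
    using anti_le[OF Min_in[OF R] y(1) Min_le[OF R(1) y(1)]] y(2) Max_ge[OF R(1) in_R[OF Min_in[OF R]]]
    by simp
  show "f (Max R) = Min R"
    using anti_le[OF z(1) Max_in[OF R] Max_ge[OF R(1) z(1)]] z(2) Min_le[OF R(1) in_R[OF Max_in[OF R]]]
    by simp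
qed

lemma aff_image_reflection: "aff_image (-1) (of_int k) M = (\<lambda>i. k - i) ` M"
  by (auto simp: aff_image_def simp flip: of_int_diff)

text \<open>An orientation-reversing affine self-map of \<open>R\<close> swaps \<open>Min R\<close> and \<open>Max R\<close>, which
  forces slope \<open>-1\<close>, i.e. a reflection.\<close>
lemma aff_equiv_self_neg_imp_Sym:
  assumes R: "finite R" and st: "aff_equiv R R s t" and s: "s < 0"
  shows "R \<in> Sym"
proof (cases "R = {}")
  case False
  have int: "aff_integral s t R" and RR: "aff_image s t R = R" using st by (auto simp: aff_equiv_def)
  define lo hi where "lo = Min R" and "hi = Max R"
  have "aff_int s t ` R = R" using RR by (simp add: aff_image_eq_image[OF int])
  moreover have "aff_int s t y < aff_int s t x" if "x \<in> R" "y \<in> R" "x < y" for x y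
    using that s by (simp add: aff_int_less_iff[OF int])
  ultimately have "aff_int s t lo = hi" "aff_int s t hi = lo"
    using antitone_perm_Min_Max[OF R False] unfolding lo_def hi_def by blast+
  then have e: "of_int hi = s * of_int lo + t" "of_int lo = s * of_int hi + t"
    using of_int_aff_int[OF int, of lo] of_int_aff_int[OF int, of hi]
      Min_in[OF R False] Max_in[OF R False]
    by (simp_all add: lo_def hi_def)
  show ?thesis
  proof (cases "lo = hi")
    case True
    have "x = lo" if "x \<in> R" for x
      using Min_le[OF R that] Max_ge[OF R that] True by (simp add: lo_def hi_def)
    then have "R = {lo}" using Min_in[OF R \<open>R \<noteq> {}\<close>] unfolding lo_def by blast
    then show ?thesis unfolding Sym_def by (intro CollectI exI[of _ "2 * lo"]) simp
  next
    case False
    have "(s + 1) * (of_int lo - of_int hi) = 0" using e by (simp add: algebra_simps)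
    then have "s = -1" using False by simp
    then have "t = of_int (lo + hi)" using e by (simp add: algebra_simps)
    then have "R = (\<lambda>i. (lo + hi) - i) ` R"
      using RR \<open>s = -1\<close> aff_image_reflection[of "lo + hi" R] by simp
    then show ?thesis unfolding Sym_def by blast
  qed
qed (simp add: Sym_def)

lemma Sym_iff_aff_equiv_self_neg:
  assumes "finite R"
  shows "R \<in> Sym \<longleftrightarrow> (\<exists>s t. s < 0 \<and> aff_equiv R R s t)"
proof
  assume "R \<in> Sym"
  then obtain j where "R = (\<lambda>i. j - i) ` R" by (auto simp: Sym_def)
  then have "aff_equiv R R (-1) (of_int j)"
    by (simp add: aff_equiv_def aff_integral_Ints aff_image_reflection)
  then show "\<exists>s t. s < 0 \<and> aff_equiv R R s t" by (intro exI) auto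
qed (use aff_equiv_self_neg_imp_Sym[OF assms] in blast)

section \<open>Counting normal forms\<close>

definition normal_forms :: "int set \<Rightarrow> (int set \<times> rule) set" where
  "normal_forms N = {(M, g). M \<subseteq> N \<and> g \<in> Lbar (card M)}"

definition nf_equiv :: "int set \<Rightarrow> ((int set \<times> rule) \<times> (int set \<times> rule)) set" where
  "nf_equiv N = {((M, g), (M', g')). (M, g) \<in> normal_forms N \<and> (M', g') \<in> normal_forms N \<and>
      (\<exists>s t b. aff_equiv M M' s t \<and> g' = act (card M) (s2_of (s < 0) b) g)}"

lemma bij_betw_normal_forms_G2:
  assumes N: "finite N"
  shows "bij_betw (case_prod Phi) (normal_forms N) (G2 N)"
proof (rule bij_betwI')
  fix p q assume "p \<in> normal_forms N" "q \<in> normal_forms N"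
  moreover obtain M g M' g' where pq: "p = (M, g)" "q = (M', g')" by (cases p, cases q)
  ultimately have "finite M" "finite M'" "g \<in> Lbar (card M)" "g' \<in> Lbar (card M')"
    using finite_subset[OF _ N] by (auto simp: normal_forms_def)
  from Phi_irreducible_inj[OF this] show "case_prod Phi p = case_prod Phi q \<longleftrightarrow> p = q"
    by (auto simp: pq)
next
  fix p assume "p \<in> normal_forms N"
  then show "case_prod Phi p \<in> G2 N" using Phi_in_G2[OF N] by (auto simp: normal_forms_def)
next
  fix \<Phi> assume "\<Phi> \<in> G2 N"
  then obtain f where f: "\<Phi> = Phi N f" by (auto simp: G2_def)
  show "\<exists>p \<in> normal_forms N. \<Phi> = case_prod Phi p"
    using reduced_rule_irreducible[OF N, of f] essential_cells_subset[OF N, of f]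
      Phi_reduced_rule[OF N, of f] f
    by (intro bexI[of _ "(essential_cells \<Phi>, reduced_rule \<Phi>)"]) (auto simp: normal_forms_def)
qed

lemma gsim_iff_nf_equiv:
  assumes N: "finite N" and p: "p \<in> normal_forms N" and q: "q \<in> normal_forms N"
  shows "gsim (case_prod Phi p) (case_prod Phi q) \<longleftrightarrow> (p, q) \<in> nf_equiv N"
proof -
  obtain M g M' g' where pq: "p = (M, g)" "q = (M', g')" by (cases p, cases q)
  have M: "finite M" "g \<in> Lbar (card M)" and M': "finite M'" "g' \<in> Lbar (card M')"
    using p q pq finite_subset[OF _ N] by (auto simp: normal_forms_def)
  show ?thesis
    using gsim_Phi_imp_aff_equiv[OF M(1) M'(1) M(2) M'(2)]
      aff_equiv_imp_gsim_Phi[OF M(1) Lbar_rules[OF M(2)]] p q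
    by (auto simp: pq nf_equiv_def)
qed

lemma card_G2_quotient:
  assumes N: "finite N"
  shows "card (G2 N // gsim_on N) = card (normal_forms N // nf_equiv N)"
proof (rule card_quotient_bij_betw[OF bij_betw_normal_forms_G2[OF N]])
  fix p q assume "p \<in> normal_forms N" "q \<in> normal_forms N"
  then show "(p, q) \<in> nf_equiv N \<longleftrightarrow> (case_prod Phi p, case_prod Phi q) \<in> gsim_on N"
    using gsim_iff_nf_equiv[OF N] bij_betw_apply[OF bij_betw_normal_forms_G2[OF N]]
    by (auto simp: gsim_on_def)
qed (auto simp: nf_equiv_def gsim_on_def)

lemma nf_equiv_sym:
  assumes "(p, q) \<in> nf_equiv N"
  shows "(q, p) \<in> nf_equiv N"
proof -
  obtain M g M' g' s t b where pq: "p = (M, g)" "q = (M', g')"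
    and nf: "p \<in> normal_forms N" "q \<in> normal_forms N"
    and st: "aff_equiv M M' s t" and g': "g' = act (card M) (s2_of (s < 0) b) g"
    using assms by (auto simp: nf_equiv_def)
  have "g = act (card M') (s2_of (1 / s < 0) b) g'"
    using act_involution nf aff_equiv_card[OF st] by (simp add: g' pq normal_forms_def Lbar_rules)
  with aff_equiv_sym[OF st]
  have "\<exists>s t b. aff_equiv M' M s t \<and> g = act (card M') (s2_of (s < 0) b) g'" by blast
  then show "(q, p) \<in> nf_equiv N" using nf by (simp add: nf_equiv_def pq)
qed

lemma nf_equiv_trans:
  assumes "(p, q) \<in> nf_equiv N" and "(q, u) \<in> nf_equiv N"
  shows "(p, u) \<in> nf_equiv N"
proof -
  obtain M g M' g' M'' g'' s t b s' t' b' where pqu: "p = (M, g)" "q = (M', g')" "u = (M'', g'')"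
    and nf: "p \<in> normal_forms N" "u \<in> normal_forms N"
    and st: "aff_equiv M M' s t" and g': "g' = act (card M) (s2_of (s < 0) b) g"
    and st': "aff_equiv M' M'' s' t'" and g'': "g'' = act (card M') (s2_of (s' < 0) b') g'"
    using assms by (auto simp: nf_equiv_def)
  have "s' * s < 0 \<longleftrightarrow> (s' < 0) \<noteq> (s < 0)"
    using st st' by (auto simp: aff_equiv_def mult_less_0_iff)
  then have "g'' = act (card M) (s2_of (s' * s < 0) (b' \<noteq> b)) g"
    using act_s2_of_act_s2_of nf aff_equiv_card[OF st]
    by (simp add: g' g'' pqu normal_forms_def Lbar_rules)
  with aff_equiv_trans[OF st st']
  have "\<exists>s t b. aff_equiv M M'' s t \<and> g'' = act (card M) (s2_of (s < 0) b) g" by blast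
  then show "(p, u) \<in> nf_equiv N" using nf by (simp add: nf_equiv_def pqu)
qed

lemma equiv_nf_equiv: "equiv (normal_forms N) (nf_equiv N)"
proof (rule equivI)
  show "refl_on (normal_forms N) (nf_equiv N)"
  proof (rule refl_onI)
    fix p assume "p \<in> normal_forms N"
    moreover obtain M g where "p = (M, g)" by (cases p)
    moreover have "\<exists>s t b. aff_equiv M M s t \<and> g = act (card M) (s2_of (s < 0) b) g"
      by (rule exI[of _ 1], rule exI[of _ 0], rule exI[of _ False]) (simp add: aff_equiv_refl s2_of_def)
    ultimately show "(p, p) \<in> nf_equiv N" by (simp add: nf_equiv_def)
  qed
  show "sym (nf_equiv N)" by (rule symI) (rule nf_equiv_sym)
  show "trans (nf_equiv N)" by (rule transI) (rule nf_equiv_trans)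
qed (auto simp: nf_equiv_def)

lemma ssim_on_iff_aff_equiv:
  "(M, M') \<in> ssim_on N \<longleftrightarrow> M \<subseteq> N \<and> M' \<subseteq> N \<and> (\<exists>s t. aff_equiv M M' s t)"
  by (simp add: ssim_on_def ssim_iff_aff_equiv)

lemma equiv_ssim_on: "equiv (Pow N) (ssim_on N)"
proof (rule equivI)
  show "refl_on (Pow N) (ssim_on N)"
    by (rule refl_onI) (use aff_equiv_refl in \<open>auto simp: ssim_on_iff_aff_equiv\<close>)
  show "sym (ssim_on N)"
  proof (rule symI)
    fix M M' assume "(M, M') \<in> ssim_on N"
    then show "(M', M) \<in> ssim_on N"
      unfolding ssim_on_iff_aff_equiv using aff_equiv_sym by blast
  qed
  show "trans (ssim_on N)"
  proof (rule transI)
    fix M M' M'' assume "(M, M') \<in> ssim_on N" "(M', M'') \<in> ssim_on N"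
    then show "(M, M'') \<in> ssim_on N"
      unfolding ssim_on_iff_aff_equiv using aff_equiv_trans by blast
  qed
qed (auto simp: ssim_on_iff_aff_equiv)

lemma rep_in_quotient:
  assumes r: "equiv A r" and X: "X \<in> A // r"
  shows "rep X \<in> X" and "rep X \<in> A" and "X = r `` {rep X}"
proof -
  obtain a where a: "a \<in> A" "X = r `` {a}" using X by (rule quotientE)
  have "a \<in> X" using equiv_class_self[OF r a(1)] a(2) by simp
  then show rep: "rep X \<in> X" unfolding rep_def by (rule someI)
  then have "(a, rep X) \<in> r" using a(2) by simp
  then show "rep X \<in> A" using equiv_type[OF r] by blast
  show "X = r `` {rep X}" using equiv_class_eq[OF r \<open>(a, rep X) \<in> r\<close>] a(2) by simp
qed

lemma nf_equiv_same_support_iff_s2_of: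
  assumes R: "R \<subseteq> N" "finite R" and g: "g \<in> Lbar (card R)" and g': "g' \<in> Lbar (card R)"
  shows "((R, g), (R, g')) \<in> nf_equiv N
    \<longleftrightarrow> (\<exists>a b. g' = act (card R) (s2_of a b) g \<and> (a \<longrightarrow> R \<in> Sym))"
proof
  assume "((R, g), (R, g')) \<in> nf_equiv N"
  then obtain s t b where "aff_equiv R R s t" "g' = act (card R) (s2_of (s < 0) b) g"
    by (auto simp: nf_equiv_def)
  then show "\<exists>a b. g' = act (card R) (s2_of a b) g \<and> (a \<longrightarrow> R \<in> Sym)"
    using aff_equiv_self_neg_imp_Sym[OF R(2)] by blast
next
  assume "\<exists>a b. g' = act (card R) (s2_of a b) g \<and> (a \<longrightarrow> R \<in> Sym)"
  then obtain a b where ab: "g' = act (card R) (s2_of a b) g" "a \<longrightarrow> R \<in> Sym" by blast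
  obtain s t where "aff_equiv R R s t" "s < 0 \<longleftrightarrow> a"
  proof (cases a)
    case True
    then show ?thesis using that ab(2) Sym_iff_aff_equiv_self_neg[OF R(2)] by blast
  next
    case False
    then show ?thesis using that[OF aff_equiv_refl] by simp
  qed
  then have "\<exists>s t b. aff_equiv R R s t \<and> g' = act (card R) (s2_of (s < 0) b) g"
    using ab(1) by blast
  then show "((R, g), (R, g')) \<in> nf_equiv N"
    using R g g' by (simp add: nf_equiv_def normal_forms_def)
qed

lemma nf_equiv_same_support_iff:
  assumes R: "R \<subseteq> N" "finite R" and g: "g \<in> Lbar (card R)" and g': "g' \<in> Lbar (card R)"
  shows "((R, g), (R, g')) \<in> nf_equiv N
    \<longleftrightarrow> (g, g') \<in> (if R \<in> Sym then orbrel (card R) else c_orbrel (card R))"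
proof (cases "R \<in> Sym")
  case True
  have "(\<exists>a b. g' = act (card R) (s2_of a b) g) \<longleftrightarrow> (\<exists>\<alpha>. g' = act (card R) \<alpha> g)"
    by (metis s2_of_surj)
  then show ?thesis using True by (simp add: nf_equiv_same_support_iff_s2_of[OF assms] orbrel_iff[OF g])
next
  case False
  have "(\<exists>b. g' = act (card R) (s2_of False b) g) \<longleftrightarrow> g' = g \<or> g' = hat_c_rule (card R) g"
    by (auto simp: s2_of_def intro: exI[of _ False] exI[of _ True])
  then show ?thesis
    using False g g' by (auto simp: nf_equiv_same_support_iff_s2_of[OF assms] c_orbrel_def)
qed

lemma nf_classes_over_support_class:
  assumes C: "C \<in> Pow N // ssim_on N"
  shows "{X \<in> normal_forms N // nf_equiv N. fst ` X \<subseteq> C}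
    = (\<lambda>g. nf_equiv N `` {(rep C, g)}) ` Lbar (card (rep C))"
proof (intro equalityI subsetI)
  have R: "rep C \<in> C" "rep C \<subseteq> N" "C = ssim_on N `` {rep C}"
    using rep_in_quotient[OF equiv_ssim_on C] by auto
  fix X assume "X \<in> {X \<in> normal_forms N // nf_equiv N. fst ` X \<subseteq> C}"
  then obtain M g where X: "X = nf_equiv N `` {(M, g)}" "(M, g) \<in> normal_forms N" "fst ` X \<subseteq> C"
    by (auto elim!: quotientE)
  then have "M \<in> C" using equiv_class_self[OF equiv_nf_equiv X(2)] by force
  then have "(rep C, M) \<in> ssim_on N" using R(3) by blast
  then obtain s t where "aff_equiv (rep C) M s t" by (auto simp: ssim_on_iff_aff_equiv)
  then obtain s t where st: "aff_equiv M (rep C) s t" using aff_equiv_sym by blast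
  define g' where "g' = act (card M) (s2_of (s < 0) False) g"
  have g': "g' \<in> Lbar (card (rep C))"
    using X(2) aff_equiv_card[OF st] by (simp add: g'_def normal_forms_def act_Lbar)
  then have "((M, g), (rep C, g')) \<in> nf_equiv N"
    using X(2) st R(2) by (auto simp: nf_equiv_def normal_forms_def g'_def)
  then have "X = nf_equiv N `` {(rep C, g')}" using X(1) equiv_class_eq[OF equiv_nf_equiv] by simp
  then show "X \<in> (\<lambda>g. nf_equiv N `` {(rep C, g)}) ` Lbar (card (rep C))" using g' by blast
next
  have R: "rep C \<subseteq> N" "C = ssim_on N `` {rep C}"
    using rep_in_quotient[OF equiv_ssim_on C] by auto
  fix X assume "X \<in> (\<lambda>g. nf_equiv N `` {(rep C, g)}) ` Lbar (card (rep C))"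
  then obtain g where X: "X = nf_equiv N `` {(rep C, g)}" "(rep C, g) \<in> normal_forms N"
    using R(1) by (auto simp: normal_forms_def)
  have "fst ` X \<subseteq> C"
  proof
    fix M assume "M \<in> fst ` X"
    then obtain s t where "M \<subseteq> N" "aff_equiv (rep C) M s t"
      using X(1) by (auto simp: nf_equiv_def normal_forms_def)
    then have "(rep C, M) \<in> ssim_on N" using R(1) by (auto simp: ssim_on_iff_aff_equiv)
    then show "M \<in> C" using R(2) by blast
  qed
  then show "X \<in> {X \<in> normal_forms N // nf_equiv N. fst ` X \<subseteq> C}"
    using X by (auto intro: quotientI)
qed

lemma card_nf_classes_over_support_class:
  assumes N: "finite N" and C: "C \<in> Pow N // ssim_on N"
  defines "m \<equiv> card (rep C)"
  shows "card {X \<in> normal_forms N // nf_equiv N. fst ` X \<subseteq> C}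
    = card (Lbar m // orbrel m)
      + (if rep C \<notin> Sym then card (tbar m {S1}) + card (tbar m {S1, Sc}) else 0)"
proof -
  let ?E = "if rep C \<in> Sym then orbrel m else c_orbrel m"
  have R: "rep C \<subseteq> N" "finite (rep C)"
    using rep_in_quotient[OF equiv_ssim_on C] finite_subset[OF _ N] by auto
  have "card ((\<lambda>g. nf_equiv N `` {(rep C, g)}) ` Lbar m) = card (Lbar m // ?E)"
  proof (rule card_image_eq_card_quotient)
    show "equiv (Lbar m) ?E" using equiv_orbrel equiv_c_orbrel by simp
    fix g g' assume g: "g \<in> Lbar m" "g' \<in> Lbar m"
    then have "(rep C, g) \<in> normal_forms N" "(rep C, g') \<in> normal_forms N"
      using R by (auto simp: normal_forms_def m_def)
    then show "nf_equiv N `` {(rep C, g)} = nf_equiv N `` {(rep C, g')} \<longleftrightarrow> (g, g') \<in> ?E"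
      using eq_equiv_class_iff[OF equiv_nf_equiv] nf_equiv_same_support_iff[OF R] g
      by (simp add: m_def)
  qed
  then show ?thesis
    using card_c_orbits[of m] by (simp add: nf_classes_over_support_class[OF C] m_def)
qed

lemma finite_normal_forms: "finite N \<Longrightarrow> finite (normal_forms N)"
  by (rule finite_subset[of _ "Pow N \<times> (\<Union>M \<in> Pow N. Lbar (card M))"])
     (auto simp: normal_forms_def finite_Lbar)

lemma card_nf_quotient_sum_over_support_classes:
  assumes N: "finite N"
  shows "card (normal_forms N // nf_equiv N)
    = (\<Sum>C \<in> Pow N // ssim_on N. card {X \<in> normal_forms N // nf_equiv N. fst ` X \<subseteq> C})"
proof (rule card_quotient_sum_fibres[OF finite_normal_forms[OF N] equiv_nf_equiv _ equiv_ssim_on])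
  show "finite (Pow N)" using N by simp
  show "fst p \<in> Pow N" if "p \<in> normal_forms N" for p
    using that by (auto simp: normal_forms_def)
  show "(fst p, fst q) \<in> ssim_on N" if "(p, q) \<in> nf_equiv N" for p q
    using that by (auto simp: nf_equiv_def normal_forms_def ssim_on_iff_aff_equiv) blast
qed

theorem proposition10:
  fixes n :: nat
  defines "N \<equiv> {1 .. int n}"
  shows "card (G2 N // gsim_on N) =
    (\<Sum>C \<in> Pow N // ssim_on N. card (Lbar (card (rep C)) // orbrel (card (rep C))))
    + (\<Sum>C \<in> {C \<in> Pow N // ssim_on N. rep C \<notin> Sym}.
         card (tbar (card (rep C)) {S1}) + card (tbar (card (rep C)) {S1, Sc}))"
proof -
  let ?Q = "Pow N // ssim_on N"
  have N: "finite N" by (simp add: N_def)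
  then have Q: "finite ?Q" by (intro finite_quotient equiv_type[OF equiv_ssim_on]) simp
  have "card (G2 N // gsim_on N)
      = (\<Sum>C \<in> ?Q. card {X \<in> normal_forms N // nf_equiv N. fst ` X \<subseteq> C})"
    by (simp add: card_G2_quotient[OF N] card_nf_quotient_sum_over_support_classes[OF N])
  also have "\<dots> = (\<Sum>C \<in> ?Q. card (Lbar (card (rep C)) // orbrel (card (rep C)))
      + (if rep C \<notin> Sym
         then card (tbar (card (rep C)) {S1}) + card (tbar (card (rep C)) {S1, Sc}) else 0))"
    by (intro sum.cong refl card_nf_classes_over_support_class[OF N])
  also have "\<dots> = (\<Sum>C \<in> ?Q. card (Lbar (card (rep C)) // orbrel (card (rep C))))
    + (\<Sum>C \<in> {C \<in> ?Q. rep C \<notin> Sym}.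
         card (tbar (card (rep C)) {S1}) + card (tbar (card (rep C)) {S1, Sc}))"
    unfolding sum.inter_filter[OF Q] by (rule sum.distrib)
  finally show ?thesis .
qed

end
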